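(* For every nonempty input word $u\in\{0,1,2\}^k$ ($k\ge 1$), the word $\mathcal{T}(u)\cdot\mathcal{T}_{\downarrow}(u)\in\{0,1\}^{k+2}$ satisfies \[ \mathrm{val}_{\mathcal{F}c}(u)=\mathrm{val}_{\mathcal{F}c}\big(\mathcal{T}(u)\cdot\mathcal{T}_{\downarrow}(u)\big). \]
   Context: Fibonacci numbers: $F_0=1$, $F_1=2$, $F_n=F_{n-1}+F_{n-2}$ for all $n\ge2$. For a word $w=w_{k-1}w_{k-2}\cdots w_0$ over $\{0,1,2\}$ (digits indexed from the right, $w_0$ the last letter), $\mathrm{val}_{\mathcal{F}}(w)=\sum_{i=0}^{k-1}w_iF_i$ (so $\mathrm{val}_{\mathcal F}(\varepsilon)=0$), and for nonempty $w$ of length $k$, $\mathrm{val}_{\mathcal{F}c}(w)=\sum_{i=0}^{k-1}w_iF_i-w_{k-1}F_k$. A Mealy machine reads an input word $u=u_0u_1\cdots u_{k-1}$ from left to right starting in its initial state; each transition $p\xrightarrow{a/b}q$ reads input letter $a$, outputs the (possibly empty) word $b$ and moves to state $q$. $M(u)$ denotes the concatenation of the outputs, and $M_{\downarrow}(u)$ denotes the extra output word attached to the state reached after reading $u$. The Berstel adder $\mathcal{B}$ has the 10 states $000.0,\ 001.1,\ 001.2,\ 010.3,\ 010.4,\ 100.5,\ 100.6,\ 101.6,\ 101.7,\ 000.1$, initial state $000.0$, and the 30 transitions (written state: input/output $\to$ next state): $000.0$: $0/0\to000.0$, $1/0\to001.2$, $2/0\to010.4$; $001.2$: $0/0\to010.3$,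 $1/0\to100.5$, $2/0\to101.7$; $010.4$: $0/0\to101.6$, $1/1\to000.0$, $2/1\to001.2$; $010.3$: $0/0\to100.5$, $1/0\to101.7$, $2/1\to000.1$; $100.5$: $0/1\to000.0$, $1/1\to001.2$, $2/1\to010.4$; $101.7$: $0/1\to010.3$, $1/1\to100.5$, $2/1\to101.7$; $101.6$: $0/1\to001.2$, $1/1\to010.4$, $2/1\to100.6$; $000.1$: $0/0\to001.1$, $1/0\to010.3$, $2/0\to100.5$; $100.6$: $0/1\to001.1$, $1/1\to010.3$, $2/1\to100.5$; $001.1$: $0/0\to001.2$, $1/0\to010.4$, $2/0\to100.6$. The extra output word of a state $xyz.j$ is the three-letter binary word $xyz$. The machine $\mathcal{T}$ is obtained from $\mathcal{B}$ by adding a new state $\mathtt{start}$, which becomes the initial state, with the three transitions $\mathtt{start}\xrightarrow{0/\varepsilon}000.0$, $\mathtt{start}\xrightarrow{1/\varepsilon}101.7$, $\mathtt{start}\xrightarrow{2/\varepsilon}100.6$ (empty output), and with extra output word $000$ at $\mathtt{start}$; all other states, transitions and extra outputs are as in $\mathcal{B}$. *)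

theory Defs
  imports Main
begin

fun fibF :: "nat \<Rightarrow> int" where
  "fibF 0 = 1"
| "fibF (Suc 0) = 2"
| "fibF (Suc (Suc n)) = fibF (Suc n) + fibF n"

text \<open>Words are lists of digits; the head of the list is the leftmost letter.
  For w = w_{k-1} ... w_0 (length k), the list is [w_{k-1}, ..., w_0],
  so the digit w_i is the list entry at position k-1-i.\<close>
definition valF :: "nat list \<Rightarrow> int" where
  "valF w = (\<Sum>i<length w. int (w ! (length w - 1 - i)) * fibF i)"

definition valFc :: "nat list \<Rightarrow> int" where
  "valFc w = valF w - int (hd w) * fibF (length w)"

datatype state = S000_0 | S001_1 | S001_2 | S010_3 | S010_4 | S100_5 | S100_6
  | S101_6 | S101_7 | S000_1 | Start

text \<open>Transition function of T: (output word, next state). Letters outside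
  {0,1,2} are never used (the theorem assumes the input is over {0,1,2}).\<close>
definition tr :: "(nat list \<times> state) \<Rightarrow> (nat list \<times> state) \<Rightarrow> (nat list \<times> state)
    \<Rightarrow> nat \<Rightarrow> nat list \<times> state" where
  "tr t0 t1 t2 a = (if a = 0 then t0 else if a = 1 then t1 else t2)"

fun delta :: "state \<Rightarrow> nat \<Rightarrow> nat list \<times> state" where
  "delta S000_0 a = tr ([0], S000_0) ([0], S001_2) ([0], S010_4) a"
| "delta S001_2 a = tr ([0], S010_3) ([0], S100_5) ([0], S101_7) a"
| "delta S010_4 a = tr ([0], S101_6) ([1], S000_0) ([1], S001_2) a"
| "delta S010_3 a = tr ([0], S100_5) ([0], S101_7) ([1], S000_1) a"
| "delta S100_5 a = tr ([1], S000_0) ([1], S001_2) ([1], S010_4) a"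
| "delta S101_7 a = tr ([1], S010_3) ([1], S100_5) ([1], S101_7) a"
| "delta S101_6 a = tr ([1], S001_2) ([1], S010_4) ([1], S100_6) a"
| "delta S000_1 a = tr ([0], S001_1) ([0], S010_3) ([0], S100_5) a"
| "delta S100_6 a = tr ([1], S001_1) ([1], S010_3) ([1], S100_5) a"
| "delta S001_1 a = tr ([0], S001_2) ([0], S010_4) ([0], S100_6) a"
| "delta Start a = tr ([], S000_0) ([], S101_7) ([], S100_6) a"

text \<open>Extra (final) output word attached to each state: xyz for state xyz.j, 000 for start.\<close>
fun extra :: "state \<Rightarrow> nat list" where
  "extra S000_0 = [0,0,0]"
| "extra S001_1 = [0,0,1]"
| "extra S001_2 = [0,0,1]"
| "extra S010_3 = [0,1,0]"
| "extra S010_4 = [0,1,0]"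
| "extra S100_5 = [1,0,0]"
| "extra S100_6 = [1,0,0]"
| "extra S101_6 = [1,0,1]"
| "extra S101_7 = [1,0,1]"
| "extra S000_1 = [0,0,0]"
| "extra Start = [0,0,0]"

fun run :: "state \<Rightarrow> nat list \<Rightarrow> nat list \<times> state" where
  "run q [] = ([], q)"
| "run q (a # u) = (let (o1, q1) = delta q a; (o2, q2) = run q1 u in (o1 @ o2, q2))"

definition T :: "nat list \<Rightarrow> nat list" where
  "T u = fst (run Start u)"

definition T_down :: "nat list \<Rightarrow> nat list" where
  "T_down u = extra (snd (run Start u))"

end

theory Submission
  imports Defs
begin

text \<open>Each state q other than the start state stands for a pending value carry q n,
  a combination of F n and F (n+1), where n is the number of input letters still to be read.
  A transition on letter a emits one bit b and moves to q' with
  carry q (n+1) + a F n = b F (n+3) + carry q' n, so the Fibonacci value of the input read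
  plus the carry is invariant; the final three-letter output of q has value carry q 0.
  The start state consumes the leading letter a without output and moves to a state whose
  carry, together with its leading output bit, accounts for the complement term - a F k.\<close>

lemma valF_Nil [simp]: "valF [] = 0"
  by (simp add: valF_def)

lemma valF_Cons: "valF (x # xs) = int x * fibF (length xs) + valF xs"
proof -
  have "(\<Sum>i<length xs. int ((x # xs) ! (length xs - i)) * fibF i)
      = (\<Sum>i<length xs. int (xs ! (length xs - 1 - i)) * fibF i)"
  proof (rule sum.cong)
    fix i assume "i \<in> {..<length xs}"
    then have "length xs - i = Suc (length xs - 1 - i)" by auto
    then show "int ((x # xs) ! (length xs - i)) * fibF i = int (xs ! (length xs - 1 - i)) * fibF i"
      by simp
  qed simp
  then show ?thesis unfolding valF_def by (simp add: sum.lessThan_Suc)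
qed

lemma fibF_add_3 [simp]: "fibF (n + 3) = 2 * fibF (Suc n) + fibF n"
  by (simp add: numeral_3_eq_3)

fun carry :: "state \<Rightarrow> nat \<Rightarrow> int" where
  "carry S000_0 n = 0"
| "carry S001_2 n = fibF n"
| "carry S010_4 n = 2 * fibF n"
| "carry S010_3 n = fibF (Suc n)"
| "carry S100_5 n = fibF n + fibF (Suc n)"
| "carry S101_7 n = 2 * fibF n + fibF (Suc n)"
| "carry S101_6 n = 2 * fibF (Suc n)"
| "carry S000_1 n = 2 * fibF n - fibF (Suc n)"
| "carry S100_6 n = 3 * fibF n"
| "carry S001_1 n = fibF (Suc n) - fibF n"
| "carry Start n = 0"

lemma length_extra [simp]: "length (extra q) = 3"
  by (cases q) auto

lemma set_extra: "set (extra q) \<subseteq> {0, 1}"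
  by (cases q) auto

lemma valF_extra: "q \<noteq> Start \<Longrightarrow> valF (extra q) = carry q 0"
  by (cases q) (auto simp: valF_def)

lemma run_Cons_output:
  "delta q a = (b, q') \<Longrightarrow> run q (a # w) = (b @ fst (run q' w), snd (run q' w))"
  by (simp add: case_prod_beta)

lemma delta_carry:
  assumes "q \<noteq> Start" and "a \<in> {0, 1, 2}"
  obtains b q' where "delta q a = ([b], q')" and "b \<in> {0, 1}" and "q' \<noteq> Start"
    and "\<And>n. carry q (Suc n) + int a * fibF n = int b * fibF (n + 3) + carry q' n"
  using assms by (cases q) (auto simp: tr_def)

lemma run_correct:
  assumes "set w \<subseteq> {0, 1, 2}" and "q \<noteq> Start"
  shows "length (fst (run q w)) = length w \<and> set (fst (run q w)) \<subseteq> {0, 1}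
    \<and> snd (run q w) \<noteq> Start
    \<and> valF (fst (run q w) @ extra (snd (run q w))) = valF w + carry q (length w)"
  using assms
proof (induction w arbitrary: q)
  case Nil
  then show ?case by (simp add: valF_extra)
next
  case (Cons a w)
  from Cons.prems obtain b q' where step: "delta q a = ([b], q')" "b \<in> {0, 1}" "q' \<noteq> Start"
    and carry_step: "carry q (Suc (length w)) + int a * fibF (length w)
      = int b * fibF (length w + 3) + carry q' (length w)"
    by (auto elim: delta_carry)
  have IH: "length (fst (run q' w)) = length w \<and> set (fst (run q' w)) \<subseteq> {0, 1}
    \<and> snd (run q' w) \<noteq> Start
    \<and> valF (fst (run q' w) @ extra (snd (run q' w))) = valF w + carry q' (length w)"
    using Cons step(3) by simp
  show ?case
    using IH step carry_step unfolding run_Cons_output[OF step(1)]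
    by (simp add: valF_Cons algebra_simps)
qed

lemma hd_run_output:
  assumes "set w \<subseteq> {0, 1, 2}" and "q \<notin> {Start, S010_3, S010_4}"
  shows "hd (fst (run q w) @ extra (snd (run q w))) = hd (extra q)"
proof (cases w)
  case (Cons a w')
  with assms have "a \<in> {0, 1, 2}" by auto
  with assms(2) obtain q' where "delta q a = ([hd (extra q)], q')"
    by (cases q) (auto simp: tr_def)
  then show ?thesis using Cons by (simp add: case_prod_beta)
qed simp

lemma delta_Start:
  assumes "a \<in> {0, 1, 2}"
  obtains q where "delta Start a = ([], q)" and "q \<notin> {Start, S010_3, S010_4}"
    and "\<And>n. carry q n - int (hd (extra q)) * fibF (n + 3) = int a * (fibF n - fibF (Suc n))"
  using assms by (auto simp: tr_def)

theorem mainTheorem1: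
  fixes u :: "nat list"
  assumes "u \<noteq> []" and "set u \<subseteq> {0, 1, 2}"
  shows "set (T u @ T_down u) \<subseteq> {0, 1}
         \<and> length (T u @ T_down u) = length u + 2
         \<and> valFc u = valFc (T u @ T_down u)"
proof -
  obtain a w where u: "u = a # w" using assms(1) by (cases u) auto
  with assms(2) have a: "a \<in> {0, 1, 2}" and w: "set w \<subseteq> {0, 1, 2}" by auto
  obtain q where start: "delta Start a = ([], q)" and q: "q \<notin> {Start, S010_3, S010_4}"
    and complement: "\<And>n. carry q n - int (hd (extra q)) * fibF (n + 3)
      = int a * (fibF n - fibF (Suc n))"
    using delta_Start[OF a] by blast
  have out: "T u @ T_down u = fst (run q w) @ extra (snd (run q w))"
    unfolding T_def T_down_def u run_Cons_output[OF start] by simp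
  have "q \<noteq> Start" using q by blast
  note run = run_correct[OF w this] hd_run_output[OF w q]
  have "valFc (T u @ T_down u) = valF w + carry q (length w) - int (hd (extra q)) * fibF (length w + 3)"
    using run unfolding out valFc_def by (simp add: eval_nat_numeral)
  also have "\<dots> = valFc u"
    using complement[of "length w"] unfolding u valFc_def by (simp add: valF_Cons right_diff_distrib)
  finally have "valFc u = valFc (T u @ T_down u)" ..
  moreover have "set (T u @ T_down u) \<subseteq> {0, 1} \<and> length (T u @ T_down u) = length u + 2"
    using run set_extra u unfolding out by auto
  ultimately show ?thesis by simp
qed

end
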